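(* Let $X$ be a finite poset with a unique maximal node. Suppose $Y$ is a height zero gluing of $X$ along $C\subseteq \min X$ with gluing map $g:X\to Y$. Let $x_0$ be a minimal node of $X$. Then $$\dim\big(g(x_0)^{\uparrow}_Y\big)=\max\{\dim(x^{\uparrow}_X)\mid x\in X,\ g(x)=g(x_0)\}.$$
   Context: All posets are nonempty. For $x,y$ in a poset $X$, $y$ covers $x$ (written $x<_c y$) if $x<y$ and there is no $z\in X$ with $x<z<y$. The length of a finite chain $C$ is $|C|-1$; $\dim(X)$ is the supremum of the lengths of finite chains in $X$; $\min X$ is the set of minimal elements of $X$. For $x\in X$ the up set is $x^{\uparrow}_X=\{y\in X: x\le y\}$ with the induced order. A poset map is an order-preserving map. A subset $C\subseteq X$ is complete if whenever $u,v\in C$ and $u\le y\le v$ with $y\in X$, then $y\in C$ (every subset of $\min X$ is complete). Given a surjective poset map $g:X\to Y$, a poset map $h:X\to Z$ is compatible with $g$ if $h$ is constant on $g^{-1}(y)$ for every $y\in Y$. A poset $Y$ is a gluing of $X$ with gluing map $g$ (a surjective poset map $X\to Y$) if for every poset map $h:X\to Z$ compatible with $g$ there is a unique poset map $\varphi:Y\to Z$ with $\varphi\circ g=h$. It is a gluing of $X$ along a complete subset $C$ if moreover $g$ is constant on $C$, and whenever $g(x)=g(x')$ for distinct $x,x'\in X$, both $x,x'\in C$. A height zero gluing is a gluing along some $C\subseteq\min X$. *)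

theory Defs
  imports Main "HOL-Library.Extended_Nat"
begin

definition poset :: "'a set \<Rightarrow> ('a \<Rightarrow> 'a \<Rightarrow> bool) \<Rightarrow> bool" where
  "poset A le \<longleftrightarrow> A \<noteq> {} \<and>
     (\<forall>x\<in>A. le x x) \<and>
     (\<forall>x\<in>A. \<forall>y\<in>A. le x y \<and> le y x \<longrightarrow> x = y) \<and>
     (\<forall>x\<in>A. \<forall>y\<in>A. \<forall>z\<in>A. le x y \<and> le y z \<longrightarrow> le x z)"

definition poset_map :: "'a set \<Rightarrow> ('a \<Rightarrow> 'a \<Rightarrow> bool) \<Rightarrow> 'b set \<Rightarrow> ('b \<Rightarrow> 'b \<Rightarrow> bool)
    \<Rightarrow> ('a \<Rightarrow> 'b) \<Rightarrow> bool" where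
  "poset_map A le B le' f \<longleftrightarrow> f ` A \<subseteq> B \<and> (\<forall>x\<in>A. \<forall>y\<in>A. le x y \<longrightarrow> le' (f x) (f y))"

definition is_chain :: "'a set \<Rightarrow> ('a \<Rightarrow> 'a \<Rightarrow> bool) \<Rightarrow> 'a set \<Rightarrow> bool" where
  "is_chain A le C \<longleftrightarrow> C \<subseteq> A \<and> (\<forall>x\<in>C. \<forall>y\<in>C. le x y \<or> le y x)"

definition pdim :: "'a set \<Rightarrow> ('a \<Rightarrow> 'a \<Rightarrow> bool) \<Rightarrow> enat" where
  "pdim A le = Sup {enat (card C - 1) | C. is_chain A le C \<and> finite C \<and> C \<noteq> {}}"

definition min_set :: "'a set \<Rightarrow> ('a \<Rightarrow> 'a \<Rightarrow> bool) \<Rightarrow> 'a set" where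
  "min_set A le = {x\<in>A. \<forall>y\<in>A. le y x \<longrightarrow> y = x}"

definition is_maximal :: "'a set \<Rightarrow> ('a \<Rightarrow> 'a \<Rightarrow> bool) \<Rightarrow> 'a \<Rightarrow> bool" where
  "is_maximal A le m \<longleftrightarrow> m \<in> A \<and> (\<forall>y\<in>A. le m y \<longrightarrow> y = m)"

text \<open>Up set of x (carrier; the order is the restriction of le).\<close>
definition up_set :: "'a set \<Rightarrow> ('a \<Rightarrow> 'a \<Rightarrow> bool) \<Rightarrow> 'a \<Rightarrow> 'a set" where
  "up_set A le x = {y\<in>A. le x y}"

definition complete_subset :: "'a set \<Rightarrow> ('a \<Rightarrow> 'a \<Rightarrow> bool) \<Rightarrow> 'a set \<Rightarrow> bool" where
  "complete_subset A le C \<longleftrightarrow> C \<subseteq> A \<and>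
     (\<forall>u\<in>C. \<forall>v\<in>C. \<forall>y\<in>A. le u y \<and> le y v \<longrightarrow> y \<in> C)"

definition compatible :: "'a set \<Rightarrow> ('a \<Rightarrow> 'b) \<Rightarrow> ('a \<Rightarrow> 'c) \<Rightarrow> bool" where
  "compatible A g h \<longleftrightarrow> (\<forall>x\<in>A. \<forall>x'\<in>A. g x = g x' \<longrightarrow> h x = h x')"

text \<open>Gluing: universal property. Test posets Z range over posets whose carrier lives in the
  element type of Y.\<close>
definition gluing :: "'a set \<Rightarrow> ('a \<Rightarrow> 'a \<Rightarrow> bool) \<Rightarrow> 'b set \<Rightarrow> ('b \<Rightarrow> 'b \<Rightarrow> bool)
    \<Rightarrow> ('a \<Rightarrow> 'b) \<Rightarrow> bool" where
  "gluing X le Y leY g \<longleftrightarrow> poset Y leY \<and> poset_map X le Y leY g \<and> g ` X = Y \<and>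
     (\<forall>(Z::'b set) leZ h. poset Z leZ \<and> poset_map X le Z leZ h \<and> compatible X g h \<longrightarrow>
        (\<exists>\<phi>. poset_map Y leY Z leZ \<phi> \<and> (\<forall>x\<in>X. \<phi> (g x) = h x) \<and>
           (\<forall>\<psi>. poset_map Y leY Z leZ \<psi> \<and> (\<forall>x\<in>X. \<psi> (g x) = h x) \<longrightarrow>
              (\<forall>y\<in>Y. \<psi> y = \<phi> y))))"

definition gluing_along :: "'a set \<Rightarrow> ('a \<Rightarrow> 'a \<Rightarrow> bool) \<Rightarrow> 'a set \<Rightarrow> 'b set
    \<Rightarrow> ('b \<Rightarrow> 'b \<Rightarrow> bool) \<Rightarrow> ('a \<Rightarrow> 'b) \<Rightarrow> bool" where
  "gluing_along X le C Y leY g \<longleftrightarrow> gluing X le Y leY g \<and> complete_subset X le C \<and>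
     (\<forall>x\<in>C. \<forall>x'\<in>C. g x = g x') \<and>
     (\<forall>x\<in>X. \<forall>x'\<in>X. x \<noteq> x' \<and> g x = g x' \<longrightarrow> x \<in> C \<and> x' \<in> C)"

end

theory Submission
  imports Defs
begin

text \<open>
  A height zero gluing g only identifies minimal points, so g is injective on every up set;
  this gives the inequality \<open>\<ge>\<close>. Testing the universal property against the order on Y
  induced from X shows that the order of Y is the image of the order of X. Hence the points
  of Y strictly above g x0 have singleton fibres on which g reflects the order, so a chain
  through them lifts to X and, below its least element, picks up a point of the fibre of
  g x0; this gives \<open>\<le>\<close>.
\<close>

lemma poset_refl: "poset X le \<Longrightarrow> x \<in> X \<Longrightarrow> le x x"
  unfolding poset_def by blast

lemma poset_antisym: "poset X le \<Longrightarrow> x \<in> X \<Longrightarrow> y \<in> X \<Longrightarrow> le x y \<Longrightarrow> le y x \<Longrightarrow> x = y"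
  unfolding poset_def by blast

lemma poset_trans:
  "poset X le \<Longrightarrow> x \<in> X \<Longrightarrow> y \<in> X \<Longrightarrow> z \<in> X \<Longrightarrow> le x y \<Longrightarrow> le y z \<Longrightarrow> le x z"
  unfolding poset_def by blast

lemma min_setD: "x \<in> min_set X le \<Longrightarrow> y \<in> X \<Longrightarrow> le y x \<Longrightarrow> y = x"
  unfolding min_set_def by auto

lemma finite_chain_has_least:
  assumes "poset X le" and "is_chain X le S" and "finite S" and "S \<noteq> {}"
  shows "\<exists>m\<in>S. \<forall>s\<in>S. le m s"
  using assms(3,4,2)
proof (induction S rule: finite_ne_induct)
  case (singleton x)
  then show ?case using poset_refl[OF assms(1)] unfolding is_chain_def by auto
next
  case (insert x F)
  then have "is_chain X le F" and xX: "x \<in> X"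
    unfolding is_chain_def by auto
  then obtain m where m: "m \<in> F" "\<forall>s\<in>F. le m s"
    using insert.IH by blast
  have FX: "F \<subseteq> X" and m_x: "le m x \<or> le x m"
    using insert.prems m(1) unfolding is_chain_def by auto
  show ?case
  proof (cases "le x m")
    case True
    then have "\<forall>s\<in>F. le x s"
      using m FX xX poset_trans[OF assms(1)] by blast
    then show ?thesis using poset_refl[OF assms(1) xX] by blast
  next
    case False
    then show ?thesis using m m_x by blast
  qed
qed

lemma chain_le_pdim:
  "is_chain A le S \<Longrightarrow> finite S \<Longrightarrow> S \<noteq> {} \<Longrightarrow> enat (card S - 1) \<le> pdim A le"
  unfolding pdim_def by (rule Sup_upper) blast

lemma pdim_leI:
  assumes "\<And>S. is_chain A le S \<Longrightarrow> finite S \<Longrightarrow> S \<noteq> {} \<Longrightarrow> enat (card S - 1) \<le> n"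
  shows "pdim A le \<le> n"
  unfolding pdim_def using assms by (blast intro: Sup_least)

lemma pdim_le_of_inj_mono:
  assumes maps: "f ` A \<subseteq> B" and inj: "inj_on f A"
    and mono: "\<And>x y. x \<in> A \<Longrightarrow> y \<in> A \<Longrightarrow> le x y \<Longrightarrow> le' (f x) (f y)"
  shows "pdim A le \<le> pdim B le'"
proof (rule pdim_leI)
  fix S assume S: "is_chain A le S" "finite S" "S \<noteq> {}"
  then have "is_chain B le' (f ` S)"
    using maps mono unfolding is_chain_def by blast
  moreover have "card (f ` S) = card S"
    using S(1) inj unfolding is_chain_def by (meson card_image inj_on_subset)
  ultimately show "enat (card S - 1) \<le> pdim B le'"
    using S chain_le_pdim[of B le' "f ` S"] by simp
qed

definition image_rel :: "'a set \<Rightarrow> ('a \<Rightarrow> 'a \<Rightarrow> bool) \<Rightarrow> ('a \<Rightarrow> 'b) \<Rightarrow> 'b \<Rightarrow> 'b \<Rightarrow> bool" where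
  "image_rel X le g y y' \<longleftrightarrow> (\<exists>a\<in>X. \<exists>b\<in>X. g a = y \<and> g b = y' \<and> le a b)"

locale height_zero_gluing =
  fixes X :: "'a set" and le :: "'a \<Rightarrow> 'a \<Rightarrow> bool" and C :: "'a set"
    and Y :: "'b set" and leY :: "'b \<Rightarrow> 'b \<Rightarrow> bool" and g :: "'a \<Rightarrow> 'b"
  assumes poset: "poset X le"
    and glue: "gluing_along X le C Y leY g"
    and C_min: "C \<subseteq> min_set X le"
begin

lemma gluing: "gluing X le Y leY g"
  using glue unfolding gluing_along_def by (elim conjE)

lemma poset_Y: "poset Y leY"
  using gluing unfolding gluing_def by (elim conjE)

lemma poset_map_g: "poset_map X le Y leY g"
  using gluing unfolding gluing_def by (elim conjE)

lemma image_eq: "g ` X = Y"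
  using gluing unfolding gluing_def by (elim conjE)

lemma factorisation:
  fixes Z :: "'b set"
  assumes "poset Z leZ" and "poset_map X le Z leZ h" and "compatible X g h"
  shows "\<exists>\<phi>. poset_map Y leY Z leZ \<phi> \<and> (\<forall>x\<in>X. \<phi> (g x) = h x)"
  using gluing assms unfolding gluing_def by blast

lemma g_mono: "x \<in> X \<Longrightarrow> y \<in> X \<Longrightarrow> le x y \<Longrightarrow> leY (g x) (g y)"
  using poset_map_g unfolding poset_map_def by blast

lemma glued_in_min_set:
  assumes "x \<in> X" and "x' \<in> X" and "x \<noteq> x'" and "g x = g x'"
  shows "x \<in> min_set X le"
proof -
  have "\<forall>x\<in>X. \<forall>x'\<in>X. x \<noteq> x' \<and> g x = g x' \<longrightarrow> x \<in> C \<and> x' \<in> C"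
    using glue unfolding gluing_along_def by (elim conjE)
  then show ?thesis
    using assms C_min by blast
qed

lemma below_glued_eq:
  "x \<in> X \<Longrightarrow> x' \<in> X \<Longrightarrow> x \<noteq> x' \<Longrightarrow> g x = g x' \<Longrightarrow> w \<in> X \<Longrightarrow> le w x \<Longrightarrow> w = x"
  using glued_in_min_set min_setD by metis

lemma fibre_of_non_minimal:
  "b \<in> X \<Longrightarrow> b \<notin> min_set X le \<Longrightarrow> b' \<in> X \<Longrightarrow> g b' = g b \<Longrightarrow> b' = b"
  using glued_in_min_set[of b b'] by auto

lemma poset_image_rel: "poset Y (image_rel X le g)"
  unfolding poset_def
proof (intro conjI ballI impI)
  show "Y \<noteq> {}"
    using poset_Y unfolding poset_def by blast
next
  fix y assume "y \<in> Y"
  then show "image_rel X le g y y"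
    using image_eq poset_refl[OF poset] unfolding image_rel_def by blast
next
  fix y y' assume "y \<in> Y" "y' \<in> Y" "image_rel X le g y y' \<and> image_rel X le g y' y"
  then obtain a1 b1 a2 b2 where w: "a1 \<in> X" "b1 \<in> X" "a2 \<in> X" "b2 \<in> X"
    "g a1 = y" "g b1 = y'" "le a1 b1" "g a2 = y'" "g b2 = y" "le a2 b2"
    unfolding image_rel_def by blast
  consider "b1 \<noteq> a2" | "b2 \<noteq> a1" | "b1 = a2" "b2 = a1" by blast
  then show "y = y'"
  proof cases
    case 1
    then have "a1 = b1" using w below_glued_eq by metis
    then show ?thesis using w by simp
  next
    case 2
    then have "a2 = b2" using w below_glued_eq by metis
    then show ?thesis using w by simp
  next
    case 3
    then show ?thesis using w poset_antisym[OF poset] by metis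
  qed
next
  fix y1 y2 y3 assume "y1 \<in> Y" "y2 \<in> Y" "y3 \<in> Y"
    "image_rel X le g y1 y2 \<and> image_rel X le g y2 y3"
  then obtain a1 b1 a2 b2 where w: "a1 \<in> X" "b1 \<in> X" "a2 \<in> X" "b2 \<in> X"
    "g a1 = y1" "g b1 = y2" "le a1 b1" "g a2 = y2" "g b2 = y3" "le a2 b2"
    unfolding image_rel_def by blast
  show "image_rel X le g y1 y3"
  proof (cases "b1 = a2")
    case True
    then show ?thesis using w poset_trans[OF poset] unfolding image_rel_def by metis
  next
    case False
    then have "a1 = b1" using w below_glued_eq by metis
    then show ?thesis using w unfolding image_rel_def by metis
  qed
qed

lemma le_imp_image_rel:
  assumes "y \<in> Y" and "y' \<in> Y" and "leY y y'"
  shows "image_rel X le g y y'"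
proof -
  have "poset_map X le Y (image_rel X le g) g"
    using image_eq unfolding poset_map_def image_rel_def by blast
  moreover have "compatible X g g"
    unfolding compatible_def by blast
  ultimately obtain \<phi> where \<phi>: "poset_map Y leY Y (image_rel X le g) \<phi>" "\<forall>x\<in>X. \<phi> (g x) = g x"
    using factorisation[OF poset_image_rel] by blast
  have "\<forall>y\<in>Y. \<phi> y = y"
    using \<phi>(2) image_eq by blast
  then show ?thesis
    using \<phi>(1) assms unfolding poset_map_def by metis
qed

lemma inj_on_up_set:
  assumes "x \<in> X"
  shows "inj_on g (up_set X le x)"
proof (rule inj_onI, rule ccontr)
  fix e e' assume e: "e \<in> up_set X le x" "e' \<in> up_set X le x" "g e = g e'" "e \<noteq> e'"
  then have "x = e" and "x = e'"
    using below_glued_eq[of e e' x] below_glued_eq[of e' e x] assms unfolding up_set_def by auto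
  with e(4) show False by simp
qed

lemma pdim_up_set_le: "x \<in> X \<Longrightarrow> pdim (up_set X le x) le \<le> pdim (up_set Y leY (g x)) leY"
  by (rule pdim_le_of_inj_mono[OF _ inj_on_up_set])
    (auto simp: up_set_def image_eq[symmetric] intro: g_mono)

lemma le_reflect_non_minimal:
  assumes "b \<in> X - min_set X le" and "b' \<in> X - min_set X le" and "leY (g b) (g b')"
  shows "le b b'"
proof -
  obtain a c where "a \<in> X" "c \<in> X" "g a = g b" "g c = g b'" "le a c"
    using le_imp_image_rel[of "g b" "g b'"] assms image_eq unfolding image_rel_def by blast
  moreover have "a = b" and "c = b'"
    using calculation assms fibre_of_non_minimal by auto
  ultimately show ?thesis by simp
qed

lemma lift_strictly_above:
  assumes "x \<in> X" and "b \<in> X" and "leY (g x) (g b)" and "g b \<noteq> g x"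
  shows "b \<notin> min_set X le" and "\<exists>a\<in>X. g a = g x \<and> le a b"
proof -
  obtain a b' where ab: "a \<in> X" "b' \<in> X" "g a = g x" "g b' = g b" "le a b'"
    using le_imp_image_rel[of "g x" "g b"] assms image_eq unfolding image_rel_def by blast
  then have "b' \<notin> min_set X le"
    using assms(4) min_setD by metis
  moreover have "b = b'"
    using fibre_of_non_minimal ab assms(2) calculation by metis
  ultimately show "b \<notin> min_set X le" and "\<exists>a\<in>X. g a = g x \<and> le a b"
    using ab by auto
qed

lemma chain_lift_strictly_above:
  assumes x0: "x0 \<in> X"
    and D: "is_chain Y leY D" "finite D" "D \<noteq> {}"
    and above: "\<And>y. y \<in> D \<Longrightarrow> leY (g x0) y \<and> y \<noteq> g x0"
  shows "\<exists>a\<in>X. g a = g x0 \<and>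
    (\<exists>E. is_chain (up_set X le a) le E \<and> finite E \<and> card E = card D + 1)"
proof -
  define E where "E = {b \<in> X. g b \<in> D}"
  have E_non_min: "E \<subseteq> X - min_set X le"
    using lift_strictly_above(1)[OF x0] above unfolding E_def by blast
  have "bij_betw g E D"
    unfolding bij_betw_def
  proof
    show "inj_on g E"
      using E_non_min fibre_of_non_minimal by (intro inj_onI) blast
    show "g ` E = D"
      using D(1) image_eq unfolding E_def is_chain_def by blast
  qed
  then have finE: "finite E" and cardE: "card E = card D" and "E \<noteq> {}"
    using D(2,3) by (auto simp: bij_betw_finite bij_betw_same_card bij_betw_def)
  have chainE: "is_chain X le E"
    using D(1) E_non_min le_reflect_non_minimal unfolding is_chain_def E_def by blast
  obtain m where m: "m \<in> E" "\<forall>s\<in>E. le m s"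
    using finite_chain_has_least[OF poset chainE finE \<open>E \<noteq> {}\<close>] by blast
  then obtain a where a: "a \<in> X" "g a = g x0" "le a m"
    using lift_strictly_above(2)[OF x0, of m] above unfolding E_def by auto
  have "a \<notin> E"
    using a(2) above unfolding E_def by auto
  have "\<forall>s\<in>E. le a s"
    using m a E_non_min poset_trans[OF poset] by blast
  then have "is_chain (up_set X le a) le (insert a E)"
    using chainE a(1) poset_refl[OF poset] unfolding is_chain_def up_set_def by auto
  then show ?thesis
    using a finE cardE \<open>a \<notin> E\<close> by (intro bexI[of _ a] exI[of _ "insert a E"]) auto
qed

lemma chain_lift:
  assumes x0: "x0 \<in> X" and D: "is_chain (up_set Y leY (g x0)) leY D" "finite D" "D \<noteq> {}"
  shows "\<exists>a\<in>X. g a = g x0 \<and>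
    (\<exists>E. is_chain (up_set X le a) le E \<and> finite E \<and> E \<noteq> {} \<and> card D \<le> card E)"
proof (cases "D - {g x0} = {}")
  case True
  then have "card D \<le> card {x0}"
    using card_mono[of "{g x0}" D] by auto
  moreover have "is_chain (up_set X le x0) le {x0}"
    using x0 poset_refl[OF poset] unfolding is_chain_def up_set_def by auto
  ultimately show ?thesis using x0 by blast
next
  case False
  have "is_chain Y leY (D - {g x0})"
    using D(1) unfolding is_chain_def up_set_def by blast
  moreover have "\<And>y. y \<in> D - {g x0} \<Longrightarrow> leY (g x0) y \<and> y \<noteq> g x0"
    using D(1) unfolding is_chain_def up_set_def by blast
  ultimately obtain a E where "a \<in> X" "g a = g x0" "is_chain (up_set X le a) le E" "finite E"
      "card E = card (D - {g x0}) + 1"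
    using chain_lift_strictly_above[OF x0 _ _ False] D(2) by blast
  moreover have "card D \<le> card (D - {g x0}) + 1"
    by (simp add: card_Diff_singleton_if) arith
  ultimately show ?thesis by fastforce
qed

end

theorem mainTheorem1:
  fixes X :: "'a set" and le :: "'a \<Rightarrow> 'a \<Rightarrow> bool"
    and Y :: "'b set" and leY :: "'b \<Rightarrow> 'b \<Rightarrow> bool"
    and g :: "'a \<Rightarrow> 'b" and C :: "'a set" and x0 :: 'a
  assumes "poset X le" and "finite X"
    and "\<exists>!m. is_maximal X le m"
    and "C \<subseteq> min_set X le"
    and "gluing_along X le C Y leY g"
    and "x0 \<in> min_set X le"
  shows "pdim (up_set Y leY (g x0)) leY
           = Max {pdim (up_set X le x) le | x. x \<in> X \<and> g x = g x0}"
proof -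
  interpret height_zero_gluing X le C Y leY g
    using assms by unfold_locales
  let ?dims = "{pdim (up_set X le x) le | x. x \<in> X \<and> g x = g x0}"
  have x0: "x0 \<in> X"
    using assms(6) unfolding min_set_def by blast
  have fin: "finite ?dims"
    using assms(2) by simp
  show ?thesis
  proof (rule antisym)
    show "pdim (up_set Y leY (g x0)) leY \<le> Max ?dims"
    proof (rule pdim_leI)
      fix D assume "is_chain (up_set Y leY (g x0)) leY D" "finite D" "D \<noteq> {}"
      then obtain a E where a: "a \<in> X" "g a = g x0" and E: "is_chain (up_set X le a) le E"
          "finite E" "E \<noteq> {}" "card D \<le> card E"
        using chain_lift[OF x0] by blast
      have "enat (card D - 1) \<le> enat (card E - 1)"
        using E(4) by simp
      also have "\<dots> \<le> pdim (up_set X le a) le"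
        using chain_le_pdim E(1-3) .
      also have "\<dots> \<le> Max ?dims"
        using fin a by (intro Max_ge) auto
      finally show "enat (card D - 1) \<le> Max ?dims" .
    qed
    show "Max ?dims \<le> pdim (up_set Y leY (g x0)) leY"
      using fin x0 pdim_up_set_le by (intro Max.boundedI) fastforce+
  qed
qed

end
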